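(* Let $k\ge 1$ be an integer and let $n_0,\dots,n_k$ be real numbers with $n_k\ge n_j>1$ for all $j=0,1,\dots,k-1$. Let $1<c<3/2$ and let $K:[0,\infty)\to[0,\infty)$ be nondecreasing and satisfy $$\int_1^\infty \frac{\varphi_K(s)}{s^{2c-1}}\,ds<\infty .$$ Then there exists a constant $\alpha>0$, depending only on $k$, $c$, $n_k$ and $K$, such that the following holds: if $A_0,\dots,A_{k-1}$ are analytic in $\mathbb D$ and satisfy $$\sup_{z\in\mathbb D}|A_j(z)|(1-|z|^2)^{n_k(k-j)}\le \alpha\quad (j=1,\dots,k-1),\qquad \sup_{z\in\mathbb D}|A_0(z)|(1-|z|^2)^{n_k(k-c)}\le\alpha,$$ then every solution $f$ of $$(f^{(k)})^{n_k}+A_{k-1}(z)(f^{(k-1)})^{n_{k-1}}+\cdots+A_1(z)(f')^{n_1}+A_0(z)f^{n_0}=0$$ belongs to $Q_K$.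
   Context: $\mathbb D$ is the open unit disk, $H(\mathbb D)$ the analytic functions on $\mathbb D$, $d\sigma$ area measure on $\mathbb D$ normalized so that $\sigma(\mathbb D)=1$. For $a\in\mathbb D$, $\varphi_a(z)=(a-z)/(1-\bar a z)$ and $g(a,z)=-\log|\varphi_a(z)|$. For a nondecreasing $K:[0,\infty)\to[0,\infty)$, $Q_K$ is the space of $f\in H(\mathbb D)$ with $\|f\|_{Q_K}^2=\sup_{a\in\mathbb D}\int_{\mathbb D}|f'(z)|^2K(g(a,z))\,d\sigma(z)<\infty$, and $\varphi_K(s)=\sup_{0\le t\le 1}K(st)/K(t)$ for $0<s<\infty$. A solution of the (nonlinear) equation is an analytic function $f$ on $\mathbb D$ satisfying it, where the real powers $(f^{(j)})^{n_j}$ are understood via some choice of branches, so that in particular $|(f^{(j)})^{n_j}|=|f^{(j)}|^{n_j}$. *)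

theory Defs
  imports "HOL-Analysis.Analysis"
begin

definition unit_disk :: "complex set" where
  "unit_disk = ball 0 1"

definition moeb :: "complex \<Rightarrow> complex \<Rightarrow> complex" where
  "moeb a z = (a - z) / (1 - cnj a * z)"

definition green :: "complex \<Rightarrow> complex \<Rightarrow> real" where
  "green a z = - ln (norm (moeb a z))"

text \<open>Q_K space; area measure normalized: d sigma = (Lebesgue area)/pi.\<close>
definition QK_norm2 :: "(real \<Rightarrow> real) \<Rightarrow> (complex \<Rightarrow> complex) \<Rightarrow> ennreal" where
  "QK_norm2 K f = (SUP a\<in>unit_disk.
      \<integral>\<^sup>+ z. indicator unit_disk z *
          ennreal ((norm (deriv f z))\<^sup>2 * K (green a z) / pi) \<partial>lborel)"

definition in_QK :: "(real \<Rightarrow> real) \<Rightarrow> (complex \<Rightarrow> complex) \<Rightarrow> bool" where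
  "in_QK K f \<longleftrightarrow> f holomorphic_on unit_disk \<and> QK_norm2 K f < \<infinity>"

text \<open>phi_K(s) = sup over 0<=t<=1 of K(st)/K(t), computed in the extended
  nonnegative reals (so a quotient x/0 with x>0 is infinite).\<close>
definition phiK :: "(real \<Rightarrow> real) \<Rightarrow> real \<Rightarrow> ennreal" where
  "phiK K s = (SUP t\<in>{0..1}. ennreal (K (s * t)) / ennreal (K t))"

text \<open>w is a value of the (multivalued) real power z^p for some branch.\<close>
definition is_power_branch :: "complex \<Rightarrow> real \<Rightarrow> complex \<Rightarrow> bool" where
  "is_power_branch z p w \<longleftrightarrow>
     (if z = 0 then w = 0 else (\<exists>L. exp L = z \<and> w = exp (complex_of_real p * L)))"

end

(*
  The integrability of phi_K(s) s^(1-2c) forces K to grow at most linearly.  Taking moduli in the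
  equation, with |P_j| = |f^(j)|^(n_j) <= (1 + |f^(j)|)^(n_k) and the superadditivity of t^(n_k),
  bounds |f^(k)| by alpha^(1/n_k) times a weighted sum of the 1 + |f^(j)|, j < k.  Along each ray
  from the origin, the maximum of the weighted quantities (32k)^j |f^(j)| (1 - t)^(j - 7/8) is then
  controlled by itself with a factor 1/2 (integrate f^(j+1) to bound f^(j); for j = k use the
  equation, where c > 1 makes the weight of A_0 harmless), so |f'(z)| = O((1 - |z|)^(-1/8)).
  As g(a,z) <= log(2/|z - a|), the integrand |f'|^2 K(g(a,.)) is dominated by
  (1 - |z|)^(-1/2) + |z - a|^(-1/2) + 1, whose integral over the disk is bounded uniformly in a.
*)
theory Submission
  imports Defs "HOL-Complex_Analysis.Complex_Analysis"
begin

section \<open>Linear growth of K\<close>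

lemma ennreal_ratio_K_le_phiK_integral:
  assumes mono: "mono_on {0..} K" and s: "s \<ge> 1" and c: "c \<ge> 1/2"
  shows "ennreal (K s) / ennreal (K 1) * ennreal (s * (2 * s) powr (1 - 2*c))
     \<le> (\<integral>\<^sup>+ x\<in>{1..}. phiK K x * ennreal (1 / x powr (2*c - 1)) \<partial>lborel)"
proof -
  define Q where "Q = ennreal (K s) / ennreal (K 1) * ennreal ((2 * s) powr (1 - 2*c))"
  have "Q * indicator {s..2 * s} x \<le> phiK K x * ennreal (1 / x powr (2*c - 1)) * indicator {1..} x"
    for x :: real
  proof (cases "x \<in> {s..2 * s}")
    case True
    then have x: "1 \<le> x" "s \<le> x" "x \<le> 2 * s" using s by auto
    have "ennreal (K s) / ennreal (K 1) \<le> ennreal (K (x * 1)) / ennreal (K 1)"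
      using mono x s by (intro divide_right_mono_ennreal ennreal_leI) (auto intro: mono_onD)
    also have "\<dots> \<le> phiK K x" unfolding phiK_def by (rule SUP_upper) auto
    finally have "ennreal (K s) / ennreal (K 1) \<le> phiK K x" .
    moreover have "(2 * s) powr (1 - 2*c) \<le> 1 / x powr (2*c - 1)"
      using c x by (simp add: powr_minus_divide[symmetric] powr_mono2')
    ultimately show ?thesis using x unfolding Q_def by (auto intro: mult_mono ennreal_leI)
  qed simp
  then have "(\<integral>\<^sup>+ x. Q * indicator {s..2 * s} x \<partial>lborel)
      \<le> (\<integral>\<^sup>+ x\<in>{1..}. phiK K x * ennreal (1 / x powr (2*c - 1)) \<partial>lborel)"
    by (intro nn_integral_mono)
  moreover have "(\<integral>\<^sup>+ x. Q * indicator {s..2 * s} x \<partial>lborel) = Q * ennreal s"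
    using s by (simp add: nn_integral_cmult_indicator)
  moreover have "Q * ennreal s = ennreal (K s) / ennreal (K 1) * ennreal (s * (2 * s) powr (1 - 2*c))"
    using s unfolding Q_def by (simp add: ennreal_mult ac_simps)
  ultimately show ?thesis by simp
qed

lemma mono_le_linear_of_le_linear_on_ge_one:
  fixes K :: "real \<Rightarrow> real"
  assumes mono: "mono_on {0..} K" and "K 1 \<ge> 0" "B \<ge> 0" and B: "\<And>s. s \<ge> 1 \<Longrightarrow> K s \<le> B * s"
    and t: "t \<ge> 0"
  shows "K t \<le> (K 1 + B) * (1 + t)"
proof (cases "t \<le> 1")
  case True
  then have "K t \<le> K 1" using mono t by (auto intro: mono_onD)
  moreover have "0 \<le> B * (1 + t) + K 1 * t" using assms by simp
  ultimately show ?thesis by (simp add: algebra_simps)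
next
  case False
  then have "K t \<le> B * t" using B by simp
  moreover have "0 \<le> K 1 * (1 + t) + B" using assms by simp
  ultimately show ?thesis by (simp add: algebra_simps)
qed

lemma le_linear_of_weighted_ratio_le:
  fixes Ks K1 s c J :: real
  assumes K1: "K1 > 0" and Ks: "Ks \<ge> 0" and s: "s \<ge> 1" and c: "c \<le> 3/2"
    and ratio: "Ks / K1 * (s * (2 * s) powr (1 - 2*c)) \<le> J"
  shows "Ks \<le> 4 * J * K1 * s"
proof -
  have "(2 * s) powr (2*c - 1) \<le> (2 * s) powr 2" using s c by (intro powr_mono) auto
  then have growth: "(2 * s) powr (2*c - 1) \<le> 4 * s * s" using s by (simp add: powr_numeral power2_eq_square)
  have "(2 * s) powr (1 - 2*c) * (2 * s) powr (2*c - 1) = 1" using s by (simp flip: powr_add)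
  then have "Ks = Ks / K1 * (s * (2 * s) powr (1 - 2*c)) * (2 * s) powr (2*c - 1) * K1 / s"
    using K1 s by (simp add: field_simps)
  also have "\<dots> \<le> J * (4 * s * s) * K1 / s"
    using ratio growth K1 s Ks order_trans[OF _ ratio]
    by (intro divide_right_mono mult_right_mono mult_mono) auto
  also have "\<dots> = 4 * J * K1 * s" using s by (simp add: field_simps)
  finally show ?thesis .
qed

lemma K_le_linear_of_phiK_integral_finite:
  assumes mono: "mono_on {0..} K" and pos: "\<forall>t\<ge>0. K t \<ge> 0" and c: "1 < c" "c < 3/2"
    and I: "(\<integral>\<^sup>+ s\<in>{1..}. phiK K s * ennreal (1 / s powr (2*c - 1)) \<partial>lborel) < \<infinity>"
  shows "\<exists>C\<ge>0. \<forall>t\<ge>0. K t \<le> C * (1 + t)"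
proof -
  define J where "J = enn2real (\<integral>\<^sup>+ s\<in>{1..}. phiK K s * ennreal (1 / s powr (2*c - 1)) \<partial>lborel)"
  have J: "J \<ge> 0" unfolding J_def by simp
  have key: "ennreal (K s) / ennreal (K 1) * ennreal (s * (2 * s) powr (1 - 2*c)) \<le> ennreal J"
    if "s \<ge> 1" for s
    using ennreal_ratio_K_le_phiK_integral[OF mono that, of c] c I unfolding J_def by simp
  obtain B where "B \<ge> 0" "\<And>s. s \<ge> 1 \<Longrightarrow> K s \<le> B * s"
  proof (cases "K 1 = 0")
    case True
    \<comment> \<open>in \<open>ennreal\<close>, \<open>K s / 0 = \<infinity>\<close> unless \<open>K s = 0\<close>\<close>
    have "K s \<le> 0 * s" if s: "s \<ge> 1" for s
    proof (rule ccontr)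
      assume "\<not> ?thesis"
      then have "ennreal (K s) / ennreal (K 1) = \<infinity>" using True by (simp add: divide_ennreal_def ennreal_mult_top)
      then show False using key[OF s] s by (simp add: ennreal_top_mult top_unique)
    qed
    then show ?thesis using that[of 0] by simp
  next
    case False
    then have K1: "K 1 > 0" using pos by (simp add: order_less_le)
    have "K s \<le> 4 * J * K 1 * s" if s: "s \<ge> 1" for s
    proof (rule le_linear_of_weighted_ratio_le[OF K1 _ s])
      show "K s / K 1 * (s * (2 * s) powr (1 - 2*c)) \<le> J"
        using key[OF s] K1 pos s J by (simp add: divide_ennreal ennreal_le_iff flip: ennreal_mult)
    qed (use pos s c in auto)
    then show ?thesis using that[of "4 * J * K 1"] J K1 by simp
  qed
  then show ?thesis
    using mono_le_linear_of_le_linear_on_ge_one[OF mono] pos by (intro exI[of _ "K 1 + B"]) auto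
qed

section \<open>Integrability of singular weights on the disk\<close>

lemma ennreal_le_suminf: "f i \<le> (\<Sum>n. f n :: ennreal)"
  by (metis ennreal_suminf_lessD not_le order_refl)

lemma suminf_ennreal_geometric:
  fixes q C :: real assumes "0 \<le> q" "q < 1" "C \<ge> 0"
  shows "(\<Sum>n. ennreal (C * q ^ n)) = ennreal (C / (1 - q))"
proof -
  have "summable (\<lambda>n. C * q ^ n)" using assms by (intro summable_mult summable_geometric) auto
  then have "(\<Sum>n. ennreal (C * q ^ n)) = ennreal (\<Sum>n. C * q ^ n)"
    using assms by (intro suminf_ennreal2) auto
  also have "(\<Sum>n. C * q ^ n) = C / (1 - q)"
    using assms by (simp add: suminf_mult suminf_geometric divide_simps)
  finally show ?thesis .
qed

lemma nn_integral_le_suminf_of_layers: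
  fixes h :: "'a::euclidean_space \<Rightarrow> ennreal"
  assumes S: "\<And>n. S n \<in> sets lborel"
    and layer: "\<And>z. \<exists>n. h z \<le> indicator (S n) z * ennreal (b n)"
  shows "(\<integral>\<^sup>+ z. h z \<partial>lborel) \<le> (\<Sum>n. ennreal (b n) * emeasure lborel (S n))"
proof -
  have "(\<integral>\<^sup>+ z. h z \<partial>lborel) \<le> (\<integral>\<^sup>+ z. (\<Sum>n. indicator (S n) z * ennreal (b n)) \<partial>lborel)"
    using layer by (intro nn_integral_mono) (meson ennreal_le_suminf order_trans)
  also have "\<dots> = (\<Sum>n. \<integral>\<^sup>+ z. indicator (S n) z * ennreal (b n) \<partial>lborel)"
    using S by (intro nn_integral_suminf) auto
  also have "\<dots> = (\<Sum>n. ennreal (b n) * emeasure lborel (S n))"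
    using S by (simp add: nn_integral_cmult_indicator mult.commute)
  finally show ?thesis .
qed

lemma emeasure_ball_complex: "r \<ge> 0 \<Longrightarrow> emeasure lborel (ball (a::complex) r) = ennreal (pi * r\<^sup>2)"
  by (simp add: emeasure_ball unit_ball_vol_2)

lemma emeasure_disk_minus_cball_le:
  assumes "\<rho> < 1"
  shows "emeasure lborel (ball (0::complex) 1 - cball 0 \<rho>) \<le> ennreal (2 * pi * (1 - \<rho>))"
proof (cases "\<rho> < 0")
  case True
  then show ?thesis by (simp add: emeasure_ball_complex ennreal_leI)
next
  case False
  have "emeasure lborel (ball (0::complex) 1 - cball 0 \<rho>) = ennreal (pi - pi * \<rho>\<^sup>2)"
    using False assms
    by (subst emeasure_Diff) (auto simp: emeasure_ball_complex emeasure_cball unit_ball_vol_2 ennreal_minus power_le_one)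
  also have "pi - pi * \<rho>\<^sup>2 = pi * (1 - \<rho>) * (1 + \<rho>)" by (simp add: algebra_simps power2_eq_square)
  also have "\<dots> \<le> pi * (1 - \<rho>) * 2" using assms False by (intro mult_left_mono) auto
  finally show ?thesis by (simp add: ennreal_leI mult.commute mult.left_commute)
qed

lemma dyadic_layer:
  fixes d :: real assumes "0 < d" "d < 2"
  shows "\<exists>k::nat. d < 2 / 2 ^ k \<and> d powr (-1/2) \<le> sqrt 2 ^ k"
proof -
  obtain n where "(1/2::real) ^ n < d / 2" using real_arch_pow_inv[of "d/2" "1/2::real"] assms by auto
  then have "2 / 2 ^ n \<le> d" by (simp add: power_divide field_simps)
  then obtain k where k: "\<not> 2 / 2 ^ k \<le> d" "2 / 2 ^ Suc k \<le> d"
    using ex_least_nat_less[of "\<lambda>i. 2 / 2 ^ i \<le> d" n] assms by auto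
  have "d powr (-1/2) = 1 / sqrt d" using assms by (simp add: powr_minus_divide powr_half_sqrt)
  also have "\<dots> \<le> 1 / sqrt (1 / 2 ^ k)" using k(2) assms by (intro divide_left_mono real_sqrt_le_mono) auto
  also have "\<dots> = sqrt 2 ^ k" by (simp add: real_sqrt_power real_sqrt_divide)
  finally show ?thesis using k(1) not_le by blast
qed

lemma nn_integral_ball_norm_diff_powr_le:
  fixes a :: complex
  shows "(\<integral>\<^sup>+ z. indicator (ball a 2) z * ennreal (norm (z - a) powr (-1/2)) \<partial>lborel)
           \<le> ennreal (4 * pi / (1 - sqrt 2 / 4))"
proof -
  have "\<exists>k. indicator (ball a 2) z * ennreal (norm (z - a) powr (-1/2))
      \<le> indicator (ball a (2 / 2 ^ k)) z * ennreal (sqrt 2 ^ k)" for z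
  proof (cases "z \<in> ball a 2 \<and> z \<noteq> a")
    case True
    then obtain k where "norm (z - a) < 2 / 2 ^ k" "norm (z - a) powr (-1/2) \<le> sqrt 2 ^ k"
      using dyadic_layer[of "norm (z - a)"] by (auto simp: dist_norm norm_minus_commute)
    then show ?thesis using True by (intro exI[of _ k]) (auto simp: dist_norm norm_minus_commute ennreal_leI)
  qed (auto simp: indicator_def)
  then have "(\<integral>\<^sup>+ z. indicator (ball a 2) z * ennreal (norm (z - a) powr (-1/2)) \<partial>lborel)
      \<le> (\<Sum>k. ennreal (sqrt 2 ^ k) * emeasure lborel (ball a (2 / 2 ^ k)))"
    by (intro nn_integral_le_suminf_of_layers) auto
  also have "\<dots> = (\<Sum>k. ennreal (4 * pi * (sqrt 2 / 4) ^ k))"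
  proof (intro suminf_cong)
    fix k :: nat
    have "(2 / 2 ^ k :: real)\<^sup>2 = 4 / 4 ^ k"
      by (simp add: power_divide power2_eq_square flip: power_mult_distrib)
    then show "ennreal (sqrt 2 ^ k) * emeasure lborel (ball a (2 / 2 ^ k)) = ennreal (4 * pi * (sqrt 2 / 4) ^ k)"
      by (simp add: emeasure_ball_complex power_divide flip: ennreal_mult)
  qed
  also have "\<dots> = ennreal (4 * pi / (1 - sqrt 2 / 4))"
    by (rule suminf_ennreal_geometric) (auto simp: real_sqrt_less_iff real_less_lsqrt)
  finally show ?thesis .
qed

lemma nn_integral_disk_boundary_dist_powr_le:
  "(\<integral>\<^sup>+ z. indicator (ball (0::complex) 1) z * ennreal ((1 - norm z) powr (-1/2)) \<partial>lborel)
     \<le> ennreal (4 * pi / (1 - sqrt 2 / 2))"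
proof -
  define S where "S k = ball (0::complex) 1 - cball 0 (1 - 2 / 2 ^ k)" for k :: nat
  have "\<exists>k. indicator (ball 0 1) z * ennreal ((1 - norm z) powr (-1/2)) \<le> indicator (S k) z * ennreal (sqrt 2 ^ k)"
    for z :: complex
  proof (cases "z \<in> ball 0 1")
    case True
    then have "norm z < 1" by simp
    then have "0 < 1 - norm z" "1 - norm z < 2" using norm_ge_zero[of z] by linarith+
    then obtain k where "1 - norm z < 2 / 2 ^ k" "(1 - norm z) powr (-1/2) \<le> sqrt 2 ^ k"
      using dyadic_layer by blast
    then show ?thesis using True by (intro exI[of _ k]) (auto simp: S_def ennreal_leI)
  qed (auto simp: indicator_def)
  then have "(\<integral>\<^sup>+ z. indicator (ball (0::complex) 1) z * ennreal ((1 - norm z) powr (-1/2)) \<partial>lborel)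
      \<le> (\<Sum>k. ennreal (sqrt 2 ^ k) * emeasure lborel (S k))"
    by (intro nn_integral_le_suminf_of_layers) (auto simp: S_def)
  also have "\<dots> \<le> (\<Sum>k. ennreal (4 * pi * (sqrt 2 / 2) ^ k))"
  proof (intro suminf_le allI)
    fix k :: nat
    have "emeasure lborel (S k) \<le> ennreal (2 * pi * (2 / 2 ^ k))"
      using emeasure_disk_minus_cball_le[of "1 - 2 / 2 ^ k"] unfolding S_def by simp
    then have "ennreal (sqrt 2 ^ k) * emeasure lborel (S k) \<le> ennreal (sqrt 2 ^ k) * ennreal (2 * pi * (2 / 2 ^ k))"
      by (rule mult_left_mono) simp
    also have "\<dots> = ennreal (4 * pi * (sqrt 2 / 2) ^ k)" by (simp add: power_divide flip: ennreal_mult)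
    finally show "ennreal (sqrt 2 ^ k) * emeasure lborel (S k) \<le> ennreal (4 * pi * (sqrt 2 / 2) ^ k)" .
  qed auto
  also have "\<dots> = ennreal (4 * pi / (1 - sqrt 2 / 2))"
    by (rule suminf_ennreal_geometric) (auto simp: real_sqrt_less_iff real_less_lsqrt)
  finally show ?thesis .
qed

section \<open>The Green function and the Q_K integrand\<close>

lemma moeb_norm_identity:
  fixes a z :: complex
  shows "(norm (1 - cnj a * z))\<^sup>2 - (norm (a - z))\<^sup>2 = (1 - (norm a)\<^sup>2) * (1 - (norm z)\<^sup>2)"
  by (simp only: cmod_power2) (simp add: algebra_simps power2_eq_square)

lemma green_nonneg:
  assumes "a \<in> unit_disk" "z \<in> unit_disk"
  shows "green a z \<ge> 0"
proof -
  have a: "norm a < 1" and z: "norm z < 1" using assms by (auto simp: unit_disk_def)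
  have "(1 - (norm a)\<^sup>2) * (1 - (norm z)\<^sup>2) > 0"
    using a z by (intro mult_pos_pos) (auto simp: abs_square_less_1)
  then have "(norm (a - z))\<^sup>2 < (norm (1 - cnj a * z))\<^sup>2" using moeb_norm_identity[of a z] by linarith
  then have "norm (a - z) < norm (1 - cnj a * z)" by (rule power2_less_imp_less) simp
  then have "norm (moeb a z) \<le> 1"
    unfolding moeb_def by (simp add: norm_divide divide_le_eq_1)
  then show ?thesis unfolding green_def by (cases "moeb a z = 0") (auto simp: ln_le_zero_iff)
qed

lemma green_le_ln:
  assumes "a \<in> unit_disk" "z \<in> unit_disk" "z \<noteq> a"
  shows "green a z \<le> ln (2 / norm (z - a))"
proof -
  have a: "norm a < 1" and z: "norm z < 1" using assms by (auto simp: unit_disk_def)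
  have d: "norm (a - z) > 0" using assms by simp
  have "norm (cnj a * z) < 1" using a z by (simp add: norm_mult) (metis mult_strict_mono' mult_1_right norm_ge_zero)
  then have "1 - cnj a * z \<noteq> 0" "norm (1 - cnj a * z) \<le> 2"
    using norm_triangle_ineq4[of 1 "cnj a * z"] by auto
  then have "green a z = ln (norm (1 - cnj a * z) / norm (a - z))"
    "ln (norm (1 - cnj a * z) / norm (a - z)) \<le> ln (2 / norm (a - z))"
    unfolding green_def moeb_def using d by (auto simp: norm_divide ln_div intro!: divide_right_mono)
  then show ?thesis by (simp add: norm_minus_commute)
qed

lemma sq_one_plus_ln_le:
  fixes y :: real assumes "y \<ge> 1"
  shows "(1 + ln y)\<^sup>2 \<le> 16 * sqrt y"
proof -
  define s where "s = sqrt (sqrt y)"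
  have "s ^ 4 = (s\<^sup>2)\<^sup>2" by (simp flip: power_mult)
  then have s: "s \<ge> 1" "s ^ 4 = y" using assms by (simp_all add: s_def)
  have "ln y = 4 * ln s" using s by (simp flip: s(2) add: ln_realpow)
  also have "\<dots> \<le> 4 * (s - 1)" using s ln_le_minus_one[of s] by simp
  finally have "(1 + ln y)\<^sup>2 \<le> (4 * s)\<^sup>2" using assms by (intro power_mono) auto
  also have "\<dots> = 16 * sqrt y" using assms by (simp add: s_def power2_eq_square)
  finally show ?thesis .
qed

lemma sq_one_plus_green_le:
  assumes a: "a \<in> unit_disk" and z: "z \<in> unit_disk"
  shows "(1 + green a z)\<^sup>2 \<le> 36 * norm (z - a) powr (-1/2) + 1"
proof (cases "z = a")
  case True
  then show ?thesis unfolding green_def moeb_def by simp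
next
  case False
  define d where "d = norm (z - a)"
  have d: "0 < d" "d < 2"
    using False a z norm_triangle_ineq4[of z a] by (auto simp: d_def unit_disk_def)
  have "(1 + green a z)\<^sup>2 \<le> (1 + ln (2 / d))\<^sup>2"
    using green_le_ln[OF a z False] green_nonneg[OF a z] unfolding d_def by (intro power_mono) auto
  also have "\<dots> \<le> 16 * sqrt (2 / d)" using d by (intro sq_one_plus_ln_le) simp
  also have "\<dots> = 16 * sqrt 2 * d powr (-1/2)"
    using d by (simp add: real_sqrt_divide powr_minus_divide powr_half_sqrt)
  also have "\<dots> \<le> 36 * d powr (-1/2)"
    using real_sqrt_le_iff[of 2 4] by (intro mult_right_mono) auto
  finally show ?thesis unfolding d_def by simp
qed

lemma QK_integrand_le:
  assumes M: "M \<ge> 0" and df: "norm (deriv f z) \<le> M * (1 - norm z) powr (-1/8)"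
    and C: "C \<ge> 0" "\<forall>t\<ge>0. K t \<le> C * (1 + t)"
    and a: "a \<in> unit_disk" and z: "z \<in> unit_disk"
  shows "(norm (deriv f z))\<^sup>2 * K (green a z)
     \<le> 36 * M\<^sup>2 * C * ((1 - norm z) powr (-1/2) + norm (z - a) powr (-1/2) + 1)"
proof -
  have z1: "norm z < 1" using z by (simp add: unit_disk_def)
  define y where "y = (1 - norm z) powr (-1/4)"
  define g where "g = green a z"
  have g0: "g \<ge> 0" unfolding g_def by (rule green_nonneg[OF a z])
  have "(norm (deriv f z))\<^sup>2 \<le> (M * (1 - norm z) powr (-1/8))\<^sup>2"
    using df by (intro power_mono) auto
  also have "\<dots> = M\<^sup>2 * y"
    unfolding y_def power2_eq_square using z1 by (simp add: powr_add[symmetric] algebra_simps)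
  finally have "(norm (deriv f z))\<^sup>2 \<le> M\<^sup>2 * y" .
  then have "(norm (deriv f z))\<^sup>2 * (C * (1 + g)) \<le> M\<^sup>2 * y * (C * (1 + g))"
    using C g0 by (intro mult_right_mono) auto
  moreover have "(norm (deriv f z))\<^sup>2 * K g \<le> (norm (deriv f z))\<^sup>2 * (C * (1 + g))"
    using C g0 by (intro mult_left_mono) auto
  ultimately have "(norm (deriv f z))\<^sup>2 * K g \<le> M\<^sup>2 * y * (C * (1 + g))" by linarith
  also have "\<dots> = M\<^sup>2 * C * (y * (1 + g))" by (simp add: ac_simps)
  also have "\<dots> \<le> M\<^sup>2 * C * (y\<^sup>2 + (1 + g)\<^sup>2)"
  proof -
    have "0 \<le> y * (1 + g)" using g0 by (simp add: y_def)
    then have "y * (1 + g) \<le> y\<^sup>2 + (1 + g)\<^sup>2" using sum_squares_bound[of y "1 + g"] by linarith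
    then show ?thesis using M C by (intro mult_left_mono) auto
  qed
  also have "\<dots> \<le> M\<^sup>2 * C * ((1 - norm z) powr (-1/2) + (36 * norm (z - a) powr (-1/2) + 1))"
    using sq_one_plus_green_le[OF a z] z1 M C unfolding g_def y_def
    by (intro mult_left_mono) (auto simp: power2_eq_square simp flip: powr_add)
  also have "\<dots> \<le> M\<^sup>2 * C * (36 * ((1 - norm z) powr (-1/2) + norm (z - a) powr (-1/2) + 1))"
    using M C by (intro mult_left_mono) auto
  finally show ?thesis unfolding g_def by (simp add: ac_simps)
qed

lemma nn_integral_disk_singular_weight_le:
  assumes a: "a \<in> unit_disk"
  shows "(\<integral>\<^sup>+ z. indicator unit_disk z * ennreal ((1 - norm z) powr (-1/2) + norm (z - a) powr (-1/2) + 1) \<partial>lborel)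
     \<le> ennreal (4 * pi / (1 - sqrt 2 / 2)) + ennreal (4 * pi / (1 - sqrt 2 / 4)) + ennreal pi"
proof -
  define X1 where "X1 z = indicator (ball (0::complex) 1) z * ennreal ((1 - norm z) powr (-1/2))" for z
  define X2 where "X2 z = indicator (ball a 2) z * ennreal (norm (z - a) powr (-1/2))" for z
  have disk_sub: "unit_disk \<subseteq> ball a 2"
  proof
    fix z assume "z \<in> unit_disk"
    then show "z \<in> ball a 2" using a norm_triangle_ineq4[of a z] by (auto simp: unit_disk_def dist_norm)
  qed
  have "indicator unit_disk z * ennreal ((1 - norm z) powr (-1/2) + norm (z - a) powr (-1/2) + 1)
      \<le> X1 z + X2 z + indicator (ball 0 1) z" for z
    using disk_sub unfolding X1_def X2_def unit_disk_def
    by (auto simp: indicator_def ennreal_plus simp del: ennreal_plus[symmetric])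
  then have "(\<integral>\<^sup>+ z. indicator unit_disk z * ennreal ((1 - norm z) powr (-1/2) + norm (z - a) powr (-1/2) + 1) \<partial>lborel)
      \<le> (\<integral>\<^sup>+ z. X1 z + X2 z + indicator (ball 0 1) z \<partial>lborel)"
    by (intro nn_integral_mono)
  also have "\<dots> = (\<integral>\<^sup>+ z. X1 z \<partial>lborel) + (\<integral>\<^sup>+ z. X2 z \<partial>lborel) + emeasure lborel (ball (0::complex) 1)"
  proof -
    have [measurable]: "ball (0::complex) 1 \<in> sets borel" "ball a 2 \<in> sets borel" by simp_all
    have "X1 \<in> borel_measurable borel" "X2 \<in> borel_measurable borel"
      unfolding X1_def X2_def by measurable
    then show ?thesis by (simp add: nn_integral_add)
  qed
  also have "\<dots> \<le> ennreal (4 * pi / (1 - sqrt 2 / 2)) + ennreal (4 * pi / (1 - sqrt 2 / 4)) + ennreal pi"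
    using nn_integral_disk_boundary_dist_powr_le nn_integral_ball_norm_diff_powr_le[of a]
    unfolding X1_def X2_def by (intro add_mono) (auto simp: emeasure_ball_complex)
  finally show ?thesis .
qed

lemma QK_norm2_finite_of_deriv_growth:
  fixes f :: "complex \<Rightarrow> complex"
  assumes M: "M \<ge> 0" and df: "\<forall>z\<in>unit_disk. norm (deriv f z) \<le> M * (1 - norm z) powr (-1/8)"
    and C: "C \<ge> 0" "\<forall>t\<ge>0. K t \<le> C * (1 + t)"
  shows "QK_norm2 K f < \<infinity>"
proof -
  define B where "B = ennreal (36 * M\<^sup>2 * C / pi) *
    (ennreal (4 * pi / (1 - sqrt 2 / 2)) + ennreal (4 * pi / (1 - sqrt 2 / 4)) + ennreal pi)"
  have "(\<integral>\<^sup>+ z. indicator unit_disk z * ennreal ((norm (deriv f z))\<^sup>2 * K (green a z) / pi) \<partial>lborel) \<le> B"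
    if a: "a \<in> unit_disk" for a
  proof -
    define W where "W z = (1 - norm z) powr (-1/2) + norm (z - a) powr (-1/2) + 1" for z
    have pt: "indicator unit_disk z * ennreal ((norm (deriv f z))\<^sup>2 * K (green a z) / pi)
      \<le> ennreal (36 * M\<^sup>2 * C / pi) * (indicator unit_disk z * ennreal (W z))" for z
    proof (cases "z \<in> unit_disk")
      case True
      have "(norm (deriv f z))\<^sup>2 * K (green a z) / pi \<le> 36 * M\<^sup>2 * C / pi * W z"
        using QK_integrand_le[OF M _ C a True] df True unfolding W_def by (simp add: divide_right_mono)
      then have "ennreal ((norm (deriv f z))\<^sup>2 * K (green a z) / pi) \<le> ennreal (36 * M\<^sup>2 * C / pi * W z)"
        by (rule ennreal_leI)
      also have "\<dots> = ennreal (36 * M\<^sup>2 * C / pi) * ennreal (W z)"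
        using M C by (intro ennreal_mult) (auto simp: W_def)
      finally show ?thesis using True by simp
    qed simp
    have "(\<integral>\<^sup>+ z. indicator unit_disk z * ennreal ((norm (deriv f z))\<^sup>2 * K (green a z) / pi) \<partial>lborel)
      \<le> ennreal (36 * M\<^sup>2 * C / pi) * (\<integral>\<^sup>+ z. indicator unit_disk z * ennreal (W z) \<partial>lborel)"
    proof -
      have [measurable]: "unit_disk \<in> sets borel" by (simp add: unit_disk_def)
      have "(\<lambda>z. indicator unit_disk z * ennreal (W z)) \<in> borel_measurable borel"
        unfolding W_def by measurable
      then show ?thesis using pt by (subst nn_integral_cmult[symmetric]) (auto intro!: nn_integral_mono)
    qed
    also have "\<dots> \<le> B"
      unfolding B_def W_def by (intro mult_left_mono nn_integral_disk_singular_weight_le a) simp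
    finally show ?thesis .
  qed
  then have "QK_norm2 K f \<le> B" unfolding QK_norm2_def by (intro SUP_least)
  moreover have "B < \<infinity>" unfolding B_def by (simp add: ennreal_mult_less_top)
  ultimately show ?thesis by (rule le_less_trans)
qed

section \<open>Moduli in the equation\<close>

lemma norm_power_branch:
  assumes "is_power_branch w p v"
  shows "norm v = norm w powr p"
proof (cases "w = 0")
  case True then show ?thesis using assms by (simp add: is_power_branch_def)
next
  case False
  then obtain L where L: "exp L = w" "v = exp (complex_of_real p * L)"
    using assms by (auto simp: is_power_branch_def)
  then have "norm w powr p = exp (p * Re L)" by (auto simp: powr_def)
  moreover have "norm v = exp (p * Re L)" using L(2) by (simp add: norm_exp_eq_Re)
  ultimately show ?thesis by simp
qed

lemma add_powr_le_powr_add: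
  fixes a b p :: real assumes "a \<ge> 0" "b \<ge> 0" "p \<ge> 1"
  shows "a powr p + b powr p \<le> (a + b) powr p"
proof (cases "a + b = 0")
  case True
  then have "a = 0" "b = 0" using assms by auto
  then show ?thesis by simp
next
  case False
  define s where "s = a + b"
  have s: "s > 0" using False assms by (simp add: s_def)
  have le: "x powr p \<le> s powr p * (x / s)" if "0 \<le> x" "x \<le> s" for x
  proof -
    have "x powr p = s powr p * (x / s) powr p" using s that by (simp flip: powr_mult)
    also have "(x / s) powr p \<le> (x / s) powr 1" using s that assms by (intro powr_mono') auto
    finally show ?thesis using s that by (simp add: mult_left_mono)
  qed
  have "a powr p + b powr p \<le> s powr p * (a / s) + s powr p * (b / s)"
    using le[of a] le[of b] assms by (intro add_mono) (auto simp: s_def)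
  also have "\<dots> = s powr p * ((a + b) / s)" by (simp add: add_divide_distrib distrib_left)
  also have "\<dots> = s powr p" using s by (simp add: s_def)
  finally show ?thesis by (simp add: s_def)
qed

lemma sum_powr_le_powr_sum:
  fixes f :: "'a \<Rightarrow> real" assumes "\<forall>x\<in>S. f x \<ge> 0" "p \<ge> 1"
  shows "(\<Sum>x\<in>S. f x powr p) \<le> (\<Sum>x\<in>S. f x) powr p"
  using assms
proof (induction S rule: infinite_finite_induct)
  case (insert x S)
  have "(\<Sum>y\<in>insert x S. f y powr p) \<le> f x powr p + (\<Sum>y\<in>S. f y) powr p"
    using insert by simp
  also have "\<dots> \<le> (f x + (\<Sum>y\<in>S. f y)) powr p"
    using insert by (intro add_powr_le_powr_add) (auto intro: sum_nonneg)
  finally show ?case using insert by simp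
qed simp_all

lemma norm_le_of_power_equation:
  fixes w p a :: "nat \<Rightarrow> complex" and n e :: "nat \<Rightarrow> real"
  assumes nk: "n k \<ge> 1" and n: "\<forall>j<k. 0 \<le> n j \<and> n j \<le> n k" and W: "W > 0" and eps: "\<epsilon> > 0"
    and branch: "\<forall>j\<le>k. is_power_branch (w j) (n j) (p j)"
    and eq: "p k + (\<Sum>j<k. a j * p j) = 0"
    and coeff: "\<forall>j<k. norm (a j) * W powr (n k * e j) \<le> \<epsilon> powr n k"
  shows "norm (w k) \<le> \<epsilon> * (\<Sum>j<k. W powr (- e j) * (1 + norm (w j)))"
proof -
  define T where "T j = \<epsilon> * W powr (- e j) * (1 + norm (w j))" for j
  have T: "T j \<ge> 0" for j unfolding T_def using eps by simp
  have term_le: "norm (a j * p j) \<le> T j powr n k" if j: "j < k" for j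
  proof -
    have "norm (p j) = norm (w j) powr n j" using branch j norm_power_branch by simp
    also have "\<dots> \<le> (1 + norm (w j)) powr n j" using n j by (intro powr_mono2) auto
    also have "\<dots> \<le> (1 + norm (w j)) powr n k" using n j by (intro powr_mono) auto
    finally have "norm (p j) \<le> (1 + norm (w j)) powr n k" .
    moreover have "norm (a j) \<le> \<epsilon> powr n k * W powr (- e j * n k)"
      using coeff j W by (simp add: powr_minus field_simps mult.commute)
    ultimately have "norm (a j * p j) \<le> \<epsilon> powr n k * W powr (- e j * n k) * (1 + norm (w j)) powr n k"
      by (simp add: norm_mult mult_mono)
    also have "\<dots> = T j powr n k"
      unfolding T_def using eps W by (simp add: powr_mult powr_powr)
    finally show ?thesis .
  qed
  have "norm (w k) powr n k = norm (p k)" using branch norm_power_branch[of "w k" "n k" "p k"] by simp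
  also have "\<dots> = norm (\<Sum>j<k. a j * p j)" using eq by (simp add: eq_neg_iff_add_eq_0[symmetric])
  also have "\<dots> \<le> (\<Sum>j<k. T j powr n k)"
    using term_le by (intro norm_sum[THEN order_trans] sum_mono) auto
  also have "\<dots> \<le> (\<Sum>j<k. T j) powr n k" using T nk by (intro sum_powr_le_powr_sum) auto
  finally have "norm (w k) \<le> (\<Sum>j<k. T j)"
    using T nk by (metis powr_less_mono2 not_le sum_nonneg less_le_trans zero_less_one)
  then show ?thesis unfolding T_def by (simp add: sum_distrib_left mult.assoc)
qed

section \<open>A differential inequality along rays\<close>

lemma norm_diff_le_of_deriv_le:
  fixes \<phi> :: "real \<Rightarrow> 'a::banach"
  assumes "a \<le> b"
    and \<phi>: "\<And>t. t \<in> {a..b} \<Longrightarrow> (\<phi> has_vector_derivative \<phi>' t) (at t)"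
    and g: "\<And>t. t \<in> {a..b} \<Longrightarrow> (g has_real_derivative g' t) (at t)"
    and le: "\<And>t. t \<in> {a..b} \<Longrightarrow> norm (\<phi>' t) \<le> g' t"
  shows "norm (\<phi> b - \<phi> a) \<le> g b - g a"
proof -
  have "(\<phi>' has_integral (\<phi> b - \<phi> a)) {a..b}"
    using assms(1) \<phi> by (intro fundamental_theorem_of_calculus) (auto intro: has_vector_derivative_at_within)
  moreover have "(g' has_integral (g b - g a)) {a..b}"
    using assms(1) g by (intro fundamental_theorem_of_calculus)
      (auto simp: has_real_derivative_iff_has_vector_derivative intro: has_vector_derivative_at_within)
  ultimately show ?thesis
    using le has_integral_norm_bound_integral_component[of \<phi>' _ "{a..b}" g' _ 1] by simp
qed

lemma norm_diff_le_of_weighted_deriv_bound: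
  fixes \<phi> :: "real \<Rightarrow> 'a::banach"
  assumes s: "0 \<le> s" "s < 1" and \<Lambda>: "\<Lambda> > 0" and E: "E \<noteq> 0"
    and deriv: "\<And>t. t \<in> {0..s} \<Longrightarrow> (\<phi> has_vector_derivative \<phi>' t) (at t)"
    and bound: "\<And>t. t \<in> {0..s} \<Longrightarrow> \<Lambda> * norm (\<phi>' t) * (1 - t) powr (E + 1) \<le> N"
  shows "norm (\<phi> s - \<phi> 0) \<le> N / (\<Lambda> * E) * ((1 - s) powr (- E) - 1)"
proof -
  define g where "g t = N / (\<Lambda> * E) * (1 - t) powr (- E)" for t
  have "(g has_real_derivative N / \<Lambda> * (1 - t) powr (- (E + 1))) (at t)" if "t \<in> {0..s}" for t
  proof -
    have "((\<lambda>t. 1 - t) has_real_derivative -1) (at t)" by (auto intro!: derivative_eq_intros)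
    from DERIV_fun_powr[OF this, of "- E"] that s
    have "((\<lambda>t. (1 - t) powr (- E)) has_real_derivative E * (1 - t) powr (- E - 1)) (at t)" by simp
    from DERIV_cmult[OF this, of "N / (\<Lambda> * E)"] show ?thesis
      unfolding g_def using E \<Lambda> by (simp add: field_simps)
  qed
  moreover have "norm (\<phi>' t) \<le> N / \<Lambda> * (1 - t) powr (- (E + 1))" if t: "t \<in> {0..s}" for t
  proof -
    have "(1 - t) powr (E + 1) > 0" using t s by simp
    then have "norm (\<phi>' t) \<le> N / \<Lambda> / (1 - t) powr (E + 1)"
      using bound[OF t] \<Lambda> by (simp add: field_simps)
    then show ?thesis by (simp only: powr_minus divide_inverse mult.assoc)
  qed
  ultimately have "norm (\<phi> s - \<phi> 0) \<le> g s - g 0"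
    using s(1) deriv by (intro norm_diff_le_of_deriv_le) auto
  then show ?thesis unfolding g_def by (simp add: algebra_simps)
qed

lemma powr_mult_powr_one_minus_sq_le:
  fixes s a e :: real assumes s: "0 \<le> s" "s < 1"
  shows "(1 - s) powr a * (1 - s\<^sup>2) powr (- e) \<le> (1 - s) powr (a - max e 0)"
proof (cases "e \<ge> 0")
  case True
  have "1 - s \<le> 1 - s\<^sup>2" using s by (simp add: power2_eq_square mult_left_le_one_le)
  then have "(1 - s\<^sup>2) powr (- e) \<le> (1 - s) powr (- e)" using s True by (intro powr_mono2') auto
  then have "(1 - s) powr a * (1 - s\<^sup>2) powr (- e) \<le> (1 - s) powr a * (1 - s) powr (- e)"
    by (intro mult_left_mono) auto
  then show ?thesis using s True by (simp flip: powr_add)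
next
  case False
  have "s\<^sup>2 \<le> 1" using s by (simp add: power_le_one)
  then have "(1 - s\<^sup>2) powr (- e) \<le> 1" using False by (intro powr_le1) auto
  then show ?thesis using False by (simp add: mult_left_le)
qed

(* The hypothesis on A_j bounds it by (1 - |z|^2) powr (- n_k * coeff_exponent k c j). *)
definition coeff_exponent :: "nat \<Rightarrow> real \<Rightarrow> nat \<Rightarrow> real" where
  "coeff_exponent k c j = (if j = 0 then real k - c else real k - real j)"

lemma weighted_top_term_le:
  fixes x :: "nat \<Rightarrow> real"
  assumes k: "k \<ge> 1" and c: "c \<ge> 1" and s: "0 \<le> s" "s < 1"
    and x: "\<And>j. j < k \<Longrightarrow> x j \<ge> 0"
    and top: "x k \<le> \<epsilon> * (\<Sum>j<k. (1 - s\<^sup>2) powr (- coeff_exponent k c j) * (1 + x j))"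
    and zero: "x 0 \<le> y + 2 * N"
    and mid: "\<And>j. j \<in> {1..<k} \<Longrightarrow> x j * (1 - s) powr (real j - 7/8) \<le> N"
    and eps: "\<epsilon> \<ge> 0"
  shows "x k * (1 - s) powr (real k - 7/8) \<le> \<epsilon> * (real k + y + (real k + 1) * N)"
proof -
  define u where "u j = (1 - s) powr (real k - 7/8) * (1 - s\<^sup>2) powr (- coeff_exponent k c j)" for j
  have "u 0 \<le> (1 - s) powr (real k - 7/8 - max (real k - c) 0)"
    using powr_mult_powr_one_minus_sq_le[OF s, of "real k - 7/8" "real k - c"]
    by (simp add: u_def coeff_exponent_def)
  also have "\<dots> \<le> 1" using s c k by (intro powr_le1) auto
  finally have u0: "u 0 \<le> 1" .
  have uj: "u j \<le> (1 - s) powr (real j - 7/8)" if "j \<in> {1..<k}" for j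
    using powr_mult_powr_one_minus_sq_le[OF s, of "real k - 7/8" "real k - real j"] that
    by (simp add: u_def coeff_exponent_def)
  have "x k * (1 - s) powr (real k - 7/8)
      \<le> \<epsilon> * (\<Sum>j<k. (1 - s\<^sup>2) powr (- coeff_exponent k c j) * (1 + x j)) * (1 - s) powr (real k - 7/8)"
    using top by (rule mult_right_mono) simp
  also have "\<dots> = \<epsilon> * (\<Sum>j<k. u j * (1 + x j))"
    by (simp add: u_def sum_distrib_left sum_distrib_right ac_simps)
  also have "(\<Sum>j<k. u j * (1 + x j)) = u 0 * (1 + x 0) + (\<Sum>j\<in>{1..<k}. u j * (1 + x j))"
    using k by (simp add: lessThan_atLeast0 sum.atLeast_Suc_lessThan)
  also have "\<dots> \<le> (1 + y + 2 * N) + (\<Sum>j\<in>{1..<k}. 1 + N)"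
  proof (intro add_mono sum_mono)
    have "u 0 * (1 + x 0) \<le> 1 * (1 + x 0)" using u0 x[of 0] k by (intro mult_right_mono) auto
    then show "u 0 * (1 + x 0) \<le> 1 + y + 2 * N" using zero by simp
    fix j assume j: "j \<in> {1..<k}"
    have "u j * (1 + x j) \<le> (1 - s) powr (real j - 7/8) * (1 + x j)"
      using uj[OF j] x[of j] j by (intro mult_right_mono) auto
    also have "\<dots> = (1 - s) powr (real j - 7/8) + x j * (1 - s) powr (real j - 7/8)"
      by (simp add: algebra_simps)
    also have "\<dots> \<le> 1 + N" using mid[OF j] s j by (intro add_mono powr_le1) auto
    finally show "u j * (1 + x j) \<le> 1 + N" .
  qed
  also have "\<dots> = real k + y + (real k + 1) * N" using k by (simp add: of_nat_diff algebra_simps)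
  finally show ?thesis using eps by (simp add: mult_left_mono)
qed

(* The j-th derivative carries the weight (1 - t) powr (j - 7/8): integrating the (j+1)-st
   derivative then costs exactly one power of 1 - t for j >= 1, while for j = 0 the remaining
   singularity (1 - t) powr (-1/8) is integrable, so the function itself stays bounded. *)
lemma norm_diff_le_of_next_weighted_bound:
  fixes \<psi> \<psi>' \<eta> :: "real \<Rightarrow> 'a::banach" and j :: nat
  assumes s: "0 \<le> s" "s < 1" and L: "L > 0"
    and deriv: "\<And>t. t \<in> {0..s} \<Longrightarrow> (\<psi> has_vector_derivative \<psi>' t) (at t)"
    and deriv_norm: "\<And>t. t \<in> {0..s} \<Longrightarrow> norm (\<psi>' t) \<le> norm (\<eta> t)"
    and bound: "\<And>t. t \<in> {0..s} \<Longrightarrow> L ^ Suc j * norm (\<eta> t) * (1 - t) powr (real (Suc j) - 7/8) \<le> N"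
  shows "norm (\<psi> s - \<psi> 0) \<le> N / (L ^ Suc j * (real j - 7/8)) * ((1 - s) powr (- (real j - 7/8)) - 1)"
proof (rule norm_diff_le_of_weighted_deriv_bound[OF s])
  show "real j - 7/8 \<noteq> 0" by (cases j) auto
  fix t assume t: "t \<in> {0..s}"
  have "L ^ Suc j * norm (\<psi>' t) * (1 - t) powr (real j - 7/8 + 1)
      \<le> L ^ Suc j * norm (\<eta> t) * (1 - t) powr (real (Suc j) - 7/8)"
  proof -
    have "real j - 7/8 + 1 = real (Suc j) - 7/8" by simp
    then show ?thesis using deriv_norm[OF t] L
      by (simp only:) (intro mult_right_mono mult_left_mono, auto)
  qed
  also have "\<dots> \<le> N" by (rule bound[OF t])
  finally show "L ^ Suc j * norm (\<psi>' t) * (1 - t) powr (real j - 7/8 + 1) \<le> N" .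
qed (use L deriv in auto)

lemma weighted_norm_le_of_next_weighted_bound:
  fixes \<psi> \<psi>' \<eta> :: "real \<Rightarrow> 'a::banach" and j :: nat
  assumes s: "0 \<le> s" "s < 1" and L: "L > 0" and N: "N \<ge> 0" and j: "j \<ge> 1"
    and deriv: "\<And>t. t \<in> {0..s} \<Longrightarrow> (\<psi> has_vector_derivative \<psi>' t) (at t)"
    and deriv_norm: "\<And>t. t \<in> {0..s} \<Longrightarrow> norm (\<psi>' t) \<le> norm (\<eta> t)"
    and bound: "\<And>t. t \<in> {0..s} \<Longrightarrow> L ^ Suc j * norm (\<eta> t) * (1 - t) powr (real (Suc j) - 7/8) \<le> N"
  shows "L ^ j * norm (\<psi> s) * (1 - s) powr (real j - 7/8) \<le> L ^ j * norm (\<psi> 0) + 8 * N / L"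
proof -
  define E where "E = real j - 7/8"
  have E: "E \<ge> 1/8" using j by (simp add: E_def)
  have "norm (\<psi> s - \<psi> 0) \<le> N / (L ^ Suc j * E) * ((1 - s) powr (- E) - 1)"
    unfolding E_def by (rule norm_diff_le_of_next_weighted_bound[OF s L deriv deriv_norm bound])
  also have "\<dots> \<le> N / (L ^ Suc j * E) * (1 - s) powr (- E)"
    using N L E by (intro mult_left_mono) auto
  finally have "norm (\<psi> s) \<le> norm (\<psi> 0) + N / (L ^ Suc j * E) * (1 - s) powr (- E)"
    using norm_triangle_ineq2[of "\<psi> s" "\<psi> 0"] by simp
  then have "L ^ j * norm (\<psi> s) * (1 - s) powr E
      \<le> L ^ j * norm (\<psi> 0) * (1 - s) powr E + N / (L * E)"
    using L E s by (simp add: field_simps powr_minus mult_right_mono)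
  also have "\<dots> \<le> L ^ j * norm (\<psi> 0) + 8 * N / L"
  proof (intro add_mono)
    show "L ^ j * norm (\<psi> 0) * (1 - s) powr E \<le> L ^ j * norm (\<psi> 0)"
      using s E L by (simp add: mult_left_le powr_le1)
    show "N / (L * E) \<le> 8 * N / L" using L E N mult_right_mono[of 1 "E * 8" N] by (simp add: field_simps)
  qed
  finally show ?thesis unfolding E_def .
qed

lemma norm_le_of_next_weighted_bound_zeroth:
  fixes \<psi> \<psi>' \<eta> :: "real \<Rightarrow> 'a::banach"
  assumes s: "0 \<le> s" "s < 1" and L: "L \<ge> 1" and N: "N \<ge> 0"
    and deriv: "\<And>t. t \<in> {0..s} \<Longrightarrow> (\<psi> has_vector_derivative \<psi>' t) (at t)"
    and deriv_norm: "\<And>t. t \<in> {0..s} \<Longrightarrow> norm (\<psi>' t) \<le> norm (\<eta> t)"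
    and bound: "\<And>t. t \<in> {0..s} \<Longrightarrow> L * norm (\<eta> t) * (1 - t) powr (1/8) \<le> N"
  shows "norm (\<psi> s) \<le> norm (\<psi> 0) + 2 * N"
proof -
  have "norm (\<psi> s - \<psi> 0) \<le> N / (L ^ Suc 0 * (real 0 - 7/8)) * ((1 - s) powr (- (real 0 - 7/8)) - 1)"
    using L bound by (intro norm_diff_le_of_next_weighted_bound[OF s _ deriv deriv_norm]) auto
  also have "\<dots> = 8 * N / (7 * L) * (1 - (1 - s) powr (7/8))"
    using L by (simp add: field_simps)
  also have "\<dots> \<le> 8 * N / (7 * L)" using s N L by (intro mult_left_le) auto
  also have "\<dots> \<le> 2 * N" using N L mult_left_mono[of 1 L N] by (simp add: field_simps)
  finally show ?thesis using norm_triangle_ineq2[of "\<psi> s" "\<psi> 0"] by simp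
qed

lemma weighted_derivative_sum_le:
  fixes \<phi> \<phi>' :: "nat \<Rightarrow> real \<Rightarrow> 'a::banach" and k :: nat
  assumes k: "k \<ge> 1" and c: "c \<ge> 1" and eps: "\<epsilon> > 0" "(32 * real k) ^ k * \<epsilon> * (real k + 1) \<le> 1/4"
    and s: "0 \<le> s" "s < 1"
    and deriv: "\<And>j t. t \<in> {0..s} \<Longrightarrow> (\<phi> j has_vector_derivative \<phi>' j t) (at t)"
    and deriv_norm: "\<And>j t. t \<in> {0..s} \<Longrightarrow> norm (\<phi>' j t) \<le> norm (\<phi> (Suc j) t)"
    and top: "norm (\<phi> k s) \<le> \<epsilon> * (\<Sum>j<k. (1 - s\<^sup>2) powr (- coeff_exponent k c j) * (1 + norm (\<phi> j s)))"
    and N: "\<And>t j. t \<in> {0..s} \<Longrightarrow> j \<in> {1..k} \<Longrightarrow>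
              (32 * real k) ^ j * norm (\<phi> j t) * (1 - t) powr (real j - 7/8) \<le> N"
  shows "(\<Sum>j\<in>{1..k}. (32 * real k) ^ j * norm (\<phi> j s) * (1 - s) powr (real j - 7/8))
    \<le> (\<Sum>j\<in>{1..<k}. (32 * real k) ^ j * norm (\<phi> j 0)) + (32 * real k) ^ k * \<epsilon> * (real k + norm (\<phi> 0 0)) + N / 2"
proof -
  define L where "L = 32 * real k"
  have L: "L \<ge> 32" using k by (simp add: L_def)
  have "0 \<le> L * norm (\<phi> 1 0)" using L by simp
  also have "\<dots> \<le> N" using N[of 0 1] k s by (simp add: L_def)
  finally have N0: "N \<ge> 0" .
  have lower: "L ^ j * norm (\<phi> j s) * (1 - s) powr (real j - 7/8) \<le> L ^ j * norm (\<phi> j 0) + N / (4 * real k)"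
    if j: "j \<in> {1..<k}" for j
    using weighted_norm_le_of_next_weighted_bound[OF s _ N0 _ deriv deriv_norm, of L j] j L N[of _ "Suc j"]
    by (simp add: L_def)
  have zero: "norm (\<phi> 0 s) \<le> norm (\<phi> 0 0) + 2 * N"
    using norm_le_of_next_weighted_bound_zeroth[OF s _ N0 deriv deriv_norm, of L] L N[of _ 1] k
    by (simp add: L_def)
  have "norm (\<phi> k s) * (1 - s) powr (real k - 7/8) \<le> \<epsilon> * (real k + norm (\<phi> 0 0) + (real k + 1) * N)"
  proof (rule weighted_top_term_le[OF k c s _ top zero _ less_imp_le[OF eps(1)]])
    fix j assume j: "j \<in> {1..<k}"
    have "L ^ j * (norm (\<phi> j s) * (1 - s) powr (real j - 7/8)) \<le> N"
      using N[of s j] j s unfolding L_def by (simp add: mult.assoc)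
    moreover have "1 * (norm (\<phi> j s) * (1 - s) powr (real j - 7/8))
        \<le> L ^ j * (norm (\<phi> j s) * (1 - s) powr (real j - 7/8))"
      using L by (intro mult_right_mono) auto
    ultimately show "norm (\<phi> j s) * (1 - s) powr (real j - 7/8) \<le> N" by simp
  qed simp
  then have "L ^ k * (norm (\<phi> k s) * (1 - s) powr (real k - 7/8))
      \<le> L ^ k * (\<epsilon> * (real k + norm (\<phi> 0 0) + (real k + 1) * N))"
    using L by (intro mult_left_mono) auto
  then have "L ^ k * norm (\<phi> k s) * (1 - s) powr (real k - 7/8)
      \<le> L ^ k * \<epsilon> * (real k + norm (\<phi> 0 0)) + (L ^ k * \<epsilon> * (real k + 1)) * N"
    by (simp add: algebra_simps)
  also have "\<dots> \<le> L ^ k * \<epsilon> * (real k + norm (\<phi> 0 0)) + N / 4"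
    using eps(2) N0 mult_right_mono[OF eps(2) N0] unfolding L_def by simp
  finally have upper: "L ^ k * norm (\<phi> k s) * (1 - s) powr (real k - 7/8)
      \<le> L ^ k * \<epsilon> * (real k + norm (\<phi> 0 0)) + N / 4" .
  have "(\<Sum>j\<in>{1..k}. L ^ j * norm (\<phi> j s) * (1 - s) powr (real j - 7/8))
      = (\<Sum>j\<in>{1..<k}. L ^ j * norm (\<phi> j s) * (1 - s) powr (real j - 7/8))
        + L ^ k * norm (\<phi> k s) * (1 - s) powr (real k - 7/8)"
    using k by (simp add: atLeastLessThanSuc_atLeastAtMost[symmetric])
  also have "\<dots> \<le> (\<Sum>j\<in>{1..<k}. L ^ j * norm (\<phi> j 0) + N / (4 * real k))
      + (L ^ k * \<epsilon> * (real k + norm (\<phi> 0 0)) + N / 4)"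
    using lower upper by (intro add_mono sum_mono) auto
  also have "\<dots> \<le> (\<Sum>j\<in>{1..<k}. L ^ j * norm (\<phi> j 0)) + L ^ k * \<epsilon> * (real k + norm (\<phi> 0 0)) + N / 2"
  proof -
    have "(\<Sum>j\<in>{1..<k}. L ^ j * norm (\<phi> j 0) + N / (4 * real k))
        = (\<Sum>j\<in>{1..<k}. L ^ j * norm (\<phi> j 0)) + (real k - 1) * (N / (4 * real k))"
      using k by (simp add: sum.distrib of_nat_diff)
    moreover have "(real k - 1) * (N / (4 * real k)) \<le> N / 4" using k N0 by (simp add: field_simps)
    ultimately show ?thesis by linarith
  qed
  finally show ?thesis unfolding L_def .
qed

lemma ray_derivative_growth:
  fixes \<phi> \<phi>' :: "nat \<Rightarrow> real \<Rightarrow> 'a::banach" and k :: nat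
  assumes k: "k \<ge> 1" and c: "c \<ge> 1" and eps: "\<epsilon> > 0" "(32 * real k) ^ k * \<epsilon> * (real k + 1) \<le> 1/4"
    and r: "0 \<le> r" "r < 1"
    and deriv: "\<And>j t. 0 \<le> t \<Longrightarrow> t < 1 \<Longrightarrow> (\<phi> j has_vector_derivative \<phi>' j t) (at t)"
    and deriv_norm: "\<And>j t. 0 \<le> t \<Longrightarrow> t < 1 \<Longrightarrow> norm (\<phi>' j t) \<le> norm (\<phi> (Suc j) t)"
    and top: "\<And>s. 0 \<le> s \<Longrightarrow> s < 1 \<Longrightarrow>
      norm (\<phi> k s) \<le> \<epsilon> * (\<Sum>j<k. (1 - s\<^sup>2) powr (- coeff_exponent k c j) * (1 + norm (\<phi> j s)))"
  shows "norm (\<phi> 1 r) * (1 - r) powr (1/8) \<le> 2 * ((\<Sum>j\<in>{1..<k}. (32 * real k) ^ j * norm (\<phi> j 0))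
           + (32 * real k) ^ k * \<epsilon> * (real k + norm (\<phi> 0 0))) / (32 * real k)"
proof -
  define c0 where "c0 = (\<Sum>j\<in>{1..<k}. (32 * real k) ^ j * norm (\<phi> j 0))
    + (32 * real k) ^ k * \<epsilon> * (real k + norm (\<phi> 0 0))"
  define G where "G t = (\<Sum>j\<in>{1..k}. (32 * real k) ^ j * norm (\<phi> j t) * (1 - t) powr (real j - 7/8))" for t
  have "continuous_on {0..r} G"
  proof (intro continuous_at_imp_continuous_on ballI)
    fix t assume t: "t \<in> {0..r}"
    have "isCont (\<phi> j) t" for j using deriv[of t j] t r by (auto intro: has_vector_derivative_continuous)
    then show "isCont G t" unfolding G_def using t r by (intro continuous_intros) auto
  qed
  then have bdd: "bdd_above (G ` {0..r})"
    by (intro bounded_imp_bdd_above compact_imp_bounded compact_continuous_image) auto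
  define N where "N = Sup (G ` {0..r})"
  have G_le_N: "G t \<le> N" if "t \<in> {0..r}" for t unfolding N_def using bdd that by (intro cSup_upper) auto
  have "G s \<le> c0 + N / 2" if s: "s \<in> {0..r}" for s
    unfolding G_def c0_def
  proof (rule weighted_derivative_sum_le[OF k c eps, where \<phi>' = \<phi>'])
    fix t j assume t: "t \<in> {0..s}" and j: "j \<in> {1..k}"
    have "(32 * real k) ^ j * norm (\<phi> j t) * (1 - t) powr (real j - 7/8) \<le> G t"
      unfolding G_def using j by (intro member_le_sum) auto
    also have "\<dots> \<le> N" using G_le_N t s by auto
    finally show "(32 * real k) ^ j * norm (\<phi> j t) * (1 - t) powr (real j - 7/8) \<le> N" .
  qed (use s r deriv deriv_norm top in auto)
  then have "N \<le> c0 + N / 2" unfolding N_def using r by (intro cSup_least) auto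
  moreover have "(32 * real k) ^ 1 * norm (\<phi> 1 r) * (1 - r) powr (real 1 - 7/8) \<le> G r"
    unfolding G_def using k by (intro member_le_sum) auto
  ultimately have "32 * real k * (norm (\<phi> 1 r) * (1 - r) powr (1/8)) \<le> 2 * c0"
    using G_le_N[of r] r by simp
  then show ?thesis unfolding c0_def using k by (simp add: field_simps)
qed

section \<open>Growth of solutions\<close>

lemma deriv_growth_of_higher_deriv_estimate:
  fixes f :: "complex \<Rightarrow> complex" and k :: nat
  assumes f: "f holomorphic_on unit_disk"
    and k: "k \<ge> 1" and c: "c \<ge> 1" and eps: "\<epsilon> > 0" "(32 * real k) ^ k * \<epsilon> * (real k + 1) \<le> 1/4"
    and est: "\<And>z. z \<in> unit_disk \<Longrightarrow> norm ((deriv ^^ k) f z)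
      \<le> \<epsilon> * (\<Sum>j<k. (1 - (norm z)\<^sup>2) powr (- coeff_exponent k c j) * (1 + norm ((deriv ^^ j) f z)))"
  shows "\<exists>M\<ge>0. \<forall>z\<in>unit_disk. norm (deriv f z) \<le> M * (1 - norm z) powr (-1/8)"
proof -
  define c0 where "c0 = (\<Sum>j\<in>{1..<k}. (32 * real k) ^ j * norm ((deriv ^^ j) f 0))
    + (32 * real k) ^ k * \<epsilon> * (real k + norm ((deriv ^^ 0) f 0))"
  define M where "M = max 0 (2 * c0 / (32 * real k))"
  have "norm (deriv f z) \<le> M * (1 - norm z) powr (-1/8)" if z: "z \<in> unit_disk" for z
  proof -
    define \<zeta> where "\<zeta> = (if z = 0 then 1 else z / of_real (norm z))"
    have \<zeta>: "norm \<zeta> = 1" "of_real (norm z) * \<zeta> = z" by (auto simp: \<zeta>_def norm_divide)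
    have ray: "norm (of_real t * \<zeta>) = t" "of_real t * \<zeta> \<in> unit_disk" if "0 \<le> t" "t < 1" for t
      using that \<zeta> by (auto simp: norm_mult unit_disk_def)
    define \<phi> where "\<phi> j t = (deriv ^^ j) f (of_real t * \<zeta>)" for j t
    have "norm (\<phi> 1 (norm z)) * (1 - norm z) powr (1/8) \<le> 2 * ((\<Sum>j\<in>{1..<k}. (32 * real k) ^ j * norm (\<phi> j 0))
           + (32 * real k) ^ k * \<epsilon> * (real k + norm (\<phi> 0 0))) / (32 * real k)"
    proof (rule ray_derivative_growth[OF k c eps, where \<phi>' = "\<lambda>j t. \<zeta> * (deriv ^^ Suc j) f (of_real t * \<zeta>)"])
      fix j :: nat and t :: real assume t: "0 \<le> t" "t < 1"
      have "((\<lambda>t. of_real t * \<zeta>) has_vector_derivative \<zeta>) (at t)"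
        by (auto intro!: derivative_eq_intros simp: has_vector_derivative_def scaleR_conv_of_real)
      moreover have "((deriv ^^ j) f has_field_derivative (deriv ^^ Suc j) f (of_real t * \<zeta>)) (at (of_real t * \<zeta>))"
        using f ray t by (intro has_field_derivative_higher_deriv) (auto simp: unit_disk_def)
      ultimately show "(\<phi> j has_vector_derivative \<zeta> * (deriv ^^ Suc j) f (of_real t * \<zeta>)) (at t)"
        unfolding \<phi>_def using field_vector_diff_chain_at by (fastforce simp: o_def mult.commute)
      show "norm (\<zeta> * (deriv ^^ Suc j) f (of_real t * \<zeta>)) \<le> norm (\<phi> (Suc j) t)"
        by (simp add: \<phi>_def norm_mult \<zeta>)
      show "norm (\<phi> k t) \<le> \<epsilon> * (\<Sum>j<k. (1 - t\<^sup>2) powr (- coeff_exponent k c j) * (1 + norm (\<phi> j t)))"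
        using est[OF ray(2)[OF t]] ray(1)[OF t] by (simp add: \<phi>_def)
    qed (use z in \<open>auto simp: unit_disk_def\<close>)
    then have "norm (deriv f z) * (1 - norm z) powr (1/8) \<le> 2 * c0 / (32 * real k)"
      unfolding \<phi>_def c0_def using \<zeta>(2) by simp
    then have "norm (deriv f z) * (1 - norm z) powr (1/8) \<le> M" by (simp add: M_def)
    moreover have "(1 - norm z) powr (1/8) > 0" using z by (simp add: unit_disk_def)
    ultimately have "norm (deriv f z) \<le> M / (1 - norm z) powr (1/8)" by (simp add: le_divide_eq)
    then show ?thesis by (simp add: powr_minus_divide)
  qed
  then show ?thesis by (intro exI[of _ M]) (auto simp: M_def)
qed

lemma in_QK_of_solution:
  fixes k :: nat and n :: "nat \<Rightarrow> real" and A P :: "nat \<Rightarrow> complex \<Rightarrow> complex" and f :: "complex \<Rightarrow> complex"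
  assumes k: "k \<ge> 1" and nk: "nk > 1" and c: "c > 1"
    and eps: "\<epsilon> > 0" "(32 * real k) ^ k * \<epsilon> * (real k + 1) \<le> 1/4"
    and K: "C \<ge> 0" "\<forall>t\<ge>0. K t \<le> C * (1 + t)"
    and n: "n k = nk" "\<forall>j<k. 1 < n j \<and> n j \<le> nk"
    and A: "\<forall>j\<in>{1..<k}. \<forall>z\<in>unit_disk.
             norm (A j z) * (1 - (norm z)\<^sup>2) powr (nk * (real k - real j)) \<le> \<epsilon> powr nk"
    and A0: "\<forall>z\<in>unit_disk. norm (A 0 z) * (1 - (norm z)\<^sup>2) powr (nk * (real k - c)) \<le> \<epsilon> powr nk"
    and f: "f holomorphic_on unit_disk"
    and branch: "\<forall>j\<le>k. \<forall>z\<in>unit_disk. is_power_branch ((deriv ^^ j) f z) (n j) (P j z)"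
    and eq: "\<forall>z\<in>unit_disk. P k z + (\<Sum>j<k. A j z * P j z) = 0"
  shows "in_QK K f"
proof -
  have "norm ((deriv ^^ k) f z)
      \<le> \<epsilon> * (\<Sum>j<k. (1 - (norm z)\<^sup>2) powr (- coeff_exponent k c j) * (1 + norm ((deriv ^^ j) f z)))"
    if z: "z \<in> unit_disk" for z
  proof (rule norm_le_of_power_equation[where p = "\<lambda>j. P j z"])
    show "0 < 1 - (norm z)\<^sup>2" using z by (simp add: unit_disk_def abs_square_less_1)
    show "\<forall>j<k. norm (A j z) * (1 - (norm z)\<^sup>2) powr (n k * coeff_exponent k c j) \<le> \<epsilon> powr n k"
      using A A0 z n(1) by (auto simp: coeff_exponent_def)
  qed (use nk eps n branch eq z in auto)
  then obtain M where "M \<ge> 0" "\<forall>z\<in>unit_disk. norm (deriv f z) \<le> M * (1 - norm z) powr (-1/8)"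
    using deriv_growth_of_higher_deriv_estimate[OF f k less_imp_le[OF c] eps] by blast
  then show ?thesis using QK_norm2_finite_of_deriv_growth[OF _ _ K] f by (simp add: in_QK_def)
qed

theorem theorem2p1:
  fixes k :: nat and c nk :: real and K :: "real \<Rightarrow> real"
  assumes "k \<ge> 1"
    and "nk > 1"
    and "1 < c" and "c < 3/2"
    and "mono_on {0..} K" and "\<forall>t\<ge>0. K t \<ge> 0"
    and "(\<integral>\<^sup>+ s\<in>{1..}. phiK K s * ennreal (1 / s powr (2*c - 1)) \<partial>lborel) < \<infinity>"
  shows "\<exists>\<alpha>>0. \<forall>(n :: nat \<Rightarrow> real) (A :: nat \<Rightarrow> complex \<Rightarrow> complex) (f :: complex \<Rightarrow> complex)
            (P :: nat \<Rightarrow> complex \<Rightarrow> complex).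
       n k = nk \<and> (\<forall>j<k. 1 < n j \<and> n j \<le> nk)
       \<and> (\<forall>j<k. A j holomorphic_on unit_disk)
       \<and> (\<forall>j\<in>{1..<k}. \<forall>z\<in>unit_disk.
             norm (A j z) * (1 - (norm z)\<^sup>2) powr (nk * (real k - real j)) \<le> \<alpha>)
       \<and> (\<forall>z\<in>unit_disk. norm (A 0 z) * (1 - (norm z)\<^sup>2) powr (nk * (real k - c)) \<le> \<alpha>)
       \<and> f holomorphic_on unit_disk
       \<and> (\<forall>j\<le>k. \<forall>z\<in>unit_disk. is_power_branch ((deriv ^^ j) f z) (n j) (P j z))
       \<and> (\<forall>z\<in>unit_disk. P k z + (\<Sum>j<k. A j z * P j z) = 0)
       \<longrightarrow> in_QK K f"
proof -
  obtain C where C: "C \<ge> 0" "\<forall>t\<ge>0. K t \<le> C * (1 + t)"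
    using K_le_linear_of_phiK_integral_finite assms(3-7) by blast
  define \<epsilon> :: real where "\<epsilon> = 1 / (4 * (real k + 1) * (32 * real k) ^ k)"
  have eps: "\<epsilon> > 0" "(32 * real k) ^ k * \<epsilon> * (real k + 1) \<le> 1/4"
    using assms(1) by (simp_all add: \<epsilon>_def)
  show ?thesis
    using in_QK_of_solution[OF assms(1-3) eps C] eps by (intro exI[of _ "\<epsilon> powr nk"]) auto
qed

end
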